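(* Let $X$ be a set and $\varphi_P\in\Im(P(X))$. Then $\varphi_P$ is a pre-subbase of some fuzzifying topology on $X$ if and only if $\varphi_P^{(\cup)}(X)=1$, where $\varphi_P^{(\cup)}(A)=\bigvee\{\bigwedge_{\lambda\in\Lambda}\varphi_P(B_\lambda):\bigcup_{\lambda\in\Lambda}B_\lambda=A\}$.
   Context: $\Im(Y)$ denotes the fuzzy subsets $Y\to[0,1]$ and $P(X)$ the power set. A fuzzifying topology on $X$ is $T\in\Im(P(X))$ with $T(X)=1$, $T(A\cap B)\ge\min(T(A),T(B))$ and $T(\bigcup_\lambda A_\lambda)\ge\inf_\lambda T(A_\lambda)$. A fuzzy family $\beta\in\Im(P(X))$ is a pre-base of $T$ if $\beta\le T$ pointwise and for all $x\in X$, $A\subseteq X$: $\sup_{x\in B\subseteq A}T(B)\le\sup_{x\in B\subseteq A}\beta(B)$. For $\varphi_P\in\Im(P(X))$ define $\varphi_P^{\Cap}(A)=\sup\{\min_{1\le i\le n}\varphi_P(B_i): n\ge1,\ B_1,\dots,B_n\subseteq X,\ \bigcap_{i=1}^nB_i=A\}$; $\varphi_P$ is a pre-subbase of $T$ if $\varphi_P^{\Cap}$ is a pre-base of $T$. *)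

theory Defs
  imports Main "HOL.Real"
begin

text \<open>Fuzzy families on P(X) are functions 'a set => real; only their values on
subsets of the carrier X matter. Sup/inf are taken in the complete lattice [0,1]:
the supremum of the empty set is 0 and the infimum of the empty set is 1.\<close>

definition fsup :: "real set \<Rightarrow> real" where
  "fsup S = (if S = {} then 0 else Sup S)"

definition finf :: "real set \<Rightarrow> real" where
  "finf S = (if S = {} then 1 else Inf S)"

definition fuzzy_family :: "'a set \<Rightarrow> ('a set \<Rightarrow> real) \<Rightarrow> bool" where
  "fuzzy_family X phi \<longleftrightarrow> (\<forall>A. A \<subseteq> X \<longrightarrow> 0 \<le> phi A \<and> phi A \<le> 1)"

definition fuzzifying_topology :: "'a set \<Rightarrow> ('a set \<Rightarrow> real) \<Rightarrow> bool" where
  "fuzzifying_topology X T \<longleftrightarrow>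
     fuzzy_family X T \<and> T X = 1 \<and>
     (\<forall>A B. A \<subseteq> X \<longrightarrow> B \<subseteq> X \<longrightarrow> T (A \<inter> B) \<ge> min (T A) (T B)) \<and>
     (\<forall>\<F>. \<F> \<subseteq> Pow X \<longrightarrow> T (\<Union>\<F>) \<ge> finf (T ` \<F>))"

definition pre_base :: "'a set \<Rightarrow> ('a set \<Rightarrow> real) \<Rightarrow> ('a set \<Rightarrow> real) \<Rightarrow> bool" where
  "pre_base X beta T \<longleftrightarrow>
     (\<forall>A. A \<subseteq> X \<longrightarrow> beta A \<le> T A) \<and>
     (\<forall>x A. x \<in> X \<longrightarrow> A \<subseteq> X \<longrightarrow>
        fsup {T B | B. x \<in> B \<and> B \<subseteq> A} \<le> fsup {beta B | B. x \<in> B \<and> B \<subseteq> A})"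

text \<open>Finite-intersection closure: sup over n >= 1 and B_1..B_n \<subseteq> X with
intersection A of min phi(B_i); a finite list of sets is represented by the nonempty finite
set of its members (the minimum only depends on these).\<close>
definition cap_closure :: "'a set \<Rightarrow> ('a set \<Rightarrow> real) \<Rightarrow> 'a set \<Rightarrow> real" where
  "cap_closure X phi A =
     fsup {finf (phi ` \<F>) | \<F>. \<F> \<noteq> {} \<and> finite \<F> \<and> \<F> \<subseteq> Pow X \<and> \<Inter>\<F> = A}"

definition pre_subbase :: "'a set \<Rightarrow> ('a set \<Rightarrow> real) \<Rightarrow> ('a set \<Rightarrow> real) \<Rightarrow> bool" where
  "pre_subbase X phi T \<longleftrightarrow> pre_base X (cap_closure X phi) T"

definition union_closure :: "'a set \<Rightarrow> ('a set \<Rightarrow> real) \<Rightarrow> 'a set \<Rightarrow> real" where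
  "union_closure X phi A =
     fsup {finf (phi ` \<F>) | \<F>. \<F> \<subseteq> Pow X \<and> \<Union>\<F> = A}"

end

theory Submission
  imports Defs
begin

(* Write \<beta> = phi^\<Inter> and N_x(A) = sup {\<beta>(B) : x \<in> B \<subseteq> A}. Because
   \<beta>(B \<inter> C) \<ge> min (\<beta> B) (\<beta> C), the assignment A \<mapsto> inf_{x \<in> A} N_x(A) is a fuzzifying
   topology with pre-base \<beta> as soon as N_x(X) = 1 for all x \<in> X; conversely T(X) = 1 forces
   N_x(X) = 1 for every fuzzifying topology T with pre-base \<beta>. It remains to see that this
   covering condition is equivalent to phi^\<Union>(X) = 1: a cover of X by sets of phi-degree \<ge> c
   gives every point a \<beta>-neighbourhood of degree \<ge> c (as \<beta> \<ge> phi), and a \<beta>-neighbourhood of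
   degree > c lies inside a set of phi-degree > c, so these sets cover X. *)

lemma fsup_least: "(\<And>s. s \<in> S \<Longrightarrow> s \<le> c) \<Longrightarrow> 0 \<le> c \<Longrightarrow> fsup S \<le> c"
  unfolding fsup_def by (auto intro: cSup_least)

lemma fsup_upper: "s \<in> S \<Longrightarrow> bdd_above S \<Longrightarrow> s \<le> fsup S"
  unfolding fsup_def by (auto intro: cSup_upper)

lemma less_fsupD: "c < fsup S \<Longrightarrow> 0 \<le> c \<Longrightarrow> bdd_above S \<Longrightarrow> \<exists>s\<in>S. c < s"
  unfolding fsup_def by (auto split: if_splits simp: less_cSup_iff)

lemma fsup_unit_interval:
  assumes "\<And>s. s \<in> S \<Longrightarrow> 0 \<le> s \<and> s \<le> 1"
  shows "0 \<le> fsup S \<and> fsup S \<le> 1"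
proof (cases "S = {}")
  case False
  then obtain s where "s \<in> S" by blast
  moreover have "bdd_above S" using assms by (auto intro: bdd_aboveI[where M=1])
  ultimately have "s \<le> Sup S" by (rule cSup_upper)
  then show ?thesis using False assms \<open>s \<in> S\<close> unfolding fsup_def
    by (fastforce intro: cSup_least)
qed (simp add: fsup_def)

lemma finf_greatest: "(\<And>s. s \<in> S \<Longrightarrow> c \<le> s) \<Longrightarrow> c \<le> 1 \<Longrightarrow> c \<le> finf S"
  unfolding finf_def by (auto intro: cInf_greatest)

lemma finf_lower: "s \<in> S \<Longrightarrow> bdd_below S \<Longrightarrow> finf S \<le> s"
  unfolding finf_def by (auto intro: cInf_lower)

lemma finf_unit_interval:
  assumes "\<And>s. s \<in> S \<Longrightarrow> 0 \<le> s \<and> s \<le> 1"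
  shows "0 \<le> finf S \<and> finf S \<le> 1"
proof (cases "S = {}")
  case False
  then obtain s where "s \<in> S" by blast
  moreover have "bdd_below S" using assms by (auto intro: bdd_belowI[where m=0])
  ultimately have "Inf S \<le> s" by (rule cInf_lower)
  then show ?thesis using False assms \<open>s \<in> S\<close> unfolding finf_def
    by (fastforce intro: cInf_greatest)
qed (simp add: finf_def)

lemma finf_image_Un:
  assumes "finite F" "F \<noteq> {}" "finite G" "G \<noteq> {}"
  shows "finf ((f :: 'b \<Rightarrow> real) ` (F \<union> G)) = min (finf (f ` F)) (finf (f ` G))"
  using assms unfolding finf_def by (simp add: image_Un inf_min[symmetric] cInf_union_distrib)

lemma min_fsup_le_fsup:
  fixes S S1 S2 :: "real set"
  assumes "S1 \<noteq> {}" "S2 \<noteq> {}" "bdd_above S1" "bdd_above S2" "bdd_above S"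
    and "\<And>a b. a \<in> S1 \<Longrightarrow> b \<in> S2 \<Longrightarrow> \<exists>c\<in>S. min a b \<le> c"
  shows "min (fsup S1) (fsup S2) \<le> fsup S"
proof (rule ccontr)
  assume "\<not> ?thesis"
  then have "fsup S < fsup S1" "fsup S < fsup S2" by auto
  moreover have "S \<noteq> {}" using assms(1,2,6) by blast
  ultimately obtain a b where "a \<in> S1" "b \<in> S2" "fsup S < a" "fsup S < b"
    using assms(1-4) by (auto simp: fsup_def less_cSup_iff)
  moreover obtain c where "c \<in> S" "min a b \<le> c" using assms(6) calculation by blast
  moreover have "c \<le> fsup S" using calculation assms(5) by (intro fsup_upper)
  ultimately show False by linarith
qed

lemma finf_image_unit_interval:
  "(\<And>C. C \<in> F \<Longrightarrow> 0 \<le> f C \<and> f C \<le> 1) \<Longrightarrow> 0 \<le> finf (f ` F) \<and> finf (f ` F) \<le> 1"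
  by (rule finf_unit_interval) blast

lemma finf_image_lower:
  assumes "C \<in> F" "\<And>D. D \<in> F \<Longrightarrow> 0 \<le> (f D :: real)"
  shows "finf (f ` F) \<le> f C"
  using assms by (intro finf_lower) (auto intro: bdd_belowI[where m=0])

lemma fuzzy_family_unit_interval:
  "fuzzy_family X phi \<Longrightarrow> \<F> \<subseteq> Pow X \<Longrightarrow> C \<in> \<F> \<Longrightarrow> 0 \<le> phi C \<and> phi C \<le> 1"
  unfolding fuzzy_family_def by blast

lemma finf_image_unit_interval_Pow:
  "fuzzy_family X phi \<Longrightarrow> \<F> \<subseteq> Pow X \<Longrightarrow> 0 \<le> finf (phi ` \<F>) \<and> finf (phi ` \<F>) \<le> 1"
  by (rule finf_image_unit_interval) (rule fuzzy_family_unit_interval)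

lemma cap_closure_unit_interval:
  assumes "fuzzy_family X phi"
  shows "0 \<le> cap_closure X phi A \<and> cap_closure X phi A \<le> 1"
  unfolding cap_closure_def
proof (rule fsup_unit_interval)
  fix s assume "s \<in> {finf (phi ` \<F>) | \<F>. \<F> \<noteq> {} \<and> finite \<F> \<and> \<F> \<subseteq> Pow X \<and> \<Inter>\<F> = A}"
  then obtain \<F> where "\<F> \<subseteq> Pow X" "s = finf (phi ` \<F>)" by blast
  then show "0 \<le> s \<and> s \<le> 1" using finf_image_unit_interval_Pow[OF assms] by blast
qed

lemma cap_closure_values_bdd_above:
  assumes "fuzzy_family X phi"
  shows "bdd_above {finf (phi ` \<F>) | \<F>. \<F> \<noteq> {} \<and> finite \<F> \<and> \<F> \<subseteq> Pow X \<and> \<Inter>\<F> = A}"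
proof (rule bdd_aboveI[where M=1])
  fix s assume "s \<in> {finf (phi ` \<F>) | \<F>. \<F> \<noteq> {} \<and> finite \<F> \<and> \<F> \<subseteq> Pow X \<and> \<Inter>\<F> = A}"
  then obtain \<F> where "\<F> \<subseteq> Pow X" "s = finf (phi ` \<F>)" by blast
  then show "s \<le> 1" using finf_image_unit_interval_Pow[OF assms] by blast
qed

lemma cap_closure_ge:
  assumes "fuzzy_family X phi" "A \<subseteq> X"
  shows "phi A \<le> cap_closure X phi A"
  unfolding cap_closure_def
proof (rule fsup_upper[OF _ cap_closure_values_bdd_above[OF assms(1)]])
  have "finf (phi ` {A}) = phi A" by (simp add: finf_def)
  then show "phi A \<in> {finf (phi ` \<F>) | \<F>. \<F> \<noteq> {} \<and> finite \<F> \<and> \<F> \<subseteq> Pow X \<and> \<Inter>\<F> = A}"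
    using assms(2) by (intro CollectI exI[of _ "{A}"]) auto
qed

lemma fuzzy_family_cap_closure:
  "fuzzy_family X phi \<Longrightarrow> fuzzy_family X (cap_closure X phi)"
  using cap_closure_ge[of X phi] cap_closure_unit_interval[of X phi]
  unfolding fuzzy_family_def by (meson order.trans)

lemma cap_closure_Int:
  assumes phi: "fuzzy_family X phi" and "C1 \<subseteq> X" "C2 \<subseteq> X"
  shows "min (cap_closure X phi C1) (cap_closure X phi C2) \<le> cap_closure X phi (C1 \<inter> C2)"
proof -
  define S where "S A = {finf (phi ` \<F>) | \<F>. \<F> \<noteq> {} \<and> finite \<F> \<and> \<F> \<subseteq> Pow X \<and> \<Inter>\<F> = A}" for A
  have S_nonempty: "S A \<noteq> {}" if "A \<subseteq> X" for A
  proof -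
    have "finf (phi ` {A}) \<in> S A" unfolding S_def using that by blast
    then show ?thesis by blast
  qed
  have "\<exists>c\<in>S (C1 \<inter> C2). min a b \<le> c" if "a \<in> S C1" "b \<in> S C2" for a b
  proof -
    obtain F where F: "F \<noteq> {}" "finite F" "F \<subseteq> Pow X" "\<Inter>F = C1" "a = finf (phi ` F)"
      using \<open>a \<in> S C1\<close> unfolding S_def by blast
    obtain G where G: "G \<noteq> {}" "finite G" "G \<subseteq> Pow X" "\<Inter>G = C2" "b = finf (phi ` G)"
      using \<open>b \<in> S C2\<close> unfolding S_def by blast
    have "finf (phi ` (F \<union> G)) \<in> S (C1 \<inter> C2)"
      unfolding S_def using F(1-4) G(1-4) by (intro CollectI exI[of _ "F \<union> G"]) auto
    moreover have "finf (phi ` (F \<union> G)) = min a b"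
      unfolding F(5) G(5) using F(2,1) G(2,1) by (rule finf_image_Un)
    ultimately show ?thesis by force
  qed
  then show ?thesis
    unfolding cap_closure_def S_def[symmetric]
    using S_nonempty assms(2,3) cap_closure_values_bdd_above[OF phi, folded S_def]
    by (intro min_fsup_le_fsup) auto
qed

lemma less_cap_closureD:
  assumes phi: "fuzzy_family X phi" and "0 \<le> c" "c < cap_closure X phi B"
  obtains C where "B \<subseteq> C" "C \<subseteq> X" "c < phi C"
proof -
  obtain F where F: "F \<noteq> {}" "F \<subseteq> Pow X" "\<Inter>F = B" "c < finf (phi ` F)"
    using less_fsupD[OF assms(3)[unfolded cap_closure_def] assms(2)
        cap_closure_values_bdd_above[OF phi]] by blast
  then obtain C where "C \<in> F" by blast
  then have "finf (phi ` F) \<le> phi C"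
    using fuzzy_family_unit_interval[OF phi F(2)] by (intro finf_image_lower) auto
  then show ?thesis using that \<open>C \<in> F\<close> F by fastforce
qed

definition nbhd_degree :: "('a set \<Rightarrow> real) \<Rightarrow> 'a \<Rightarrow> 'a set \<Rightarrow> real" where
  "nbhd_degree \<beta> x A = fsup {\<beta> B | B. x \<in> B \<and> B \<subseteq> A}"

lemma pre_base_iff_nbhd_degree:
  "pre_base X \<beta> T \<longleftrightarrow> (\<forall>A. A \<subseteq> X \<longrightarrow> \<beta> A \<le> T A) \<and>
     (\<forall>x A. x \<in> X \<longrightarrow> A \<subseteq> X \<longrightarrow> nbhd_degree T x A \<le> nbhd_degree \<beta> x A)"
  by (simp add: pre_base_def nbhd_degree_def)

lemma nbhd_degree_values_bdd_above:
  assumes "fuzzy_family X \<beta>" "A \<subseteq> X"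
  shows "bdd_above {\<beta> B | B. x \<in> B \<and> B \<subseteq> A}"
proof (rule bdd_aboveI[where M=1])
  fix s assume "s \<in> {\<beta> B | B. x \<in> B \<and> B \<subseteq> A}"
  then obtain B where "s = \<beta> B" "B \<subseteq> A" by blast
  then show "s \<le> 1" using assms unfolding fuzzy_family_def by auto
qed

lemma nbhd_degree_unit_interval:
  assumes "fuzzy_family X \<beta>" "A \<subseteq> X"
  shows "0 \<le> nbhd_degree \<beta> x A \<and> nbhd_degree \<beta> x A \<le> 1"
  unfolding nbhd_degree_def
proof (rule fsup_unit_interval)
  fix s assume "s \<in> {\<beta> B | B. x \<in> B \<and> B \<subseteq> A}"
  then obtain B where "s = \<beta> B" "B \<subseteq> A" by blast
  then show "0 \<le> s \<and> s \<le> 1" using assms unfolding fuzzy_family_def by auto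
qed

lemma le_nbhd_degree:
  assumes "fuzzy_family X \<beta>" "A \<subseteq> X" "x \<in> B" "B \<subseteq> A"
  shows "\<beta> B \<le> nbhd_degree \<beta> x A"
  unfolding nbhd_degree_def
  using assms(3,4) by (intro fsup_upper nbhd_degree_values_bdd_above[OF assms(1,2)]) blast

lemma less_nbhd_degreeD:
  assumes "fuzzy_family X \<beta>" "A \<subseteq> X" "0 \<le> c" "c < nbhd_degree \<beta> x A"
  obtains B where "x \<in> B" "B \<subseteq> A" "c < \<beta> B"
  using less_fsupD[OF assms(4)[unfolded nbhd_degree_def] assms(3)
      nbhd_degree_values_bdd_above[OF assms(1,2)]] that by blast

lemma nbhd_degree_mono:
  assumes \<beta>: "fuzzy_family X \<beta>" and "A \<subseteq> A'" "A' \<subseteq> X"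
  shows "nbhd_degree \<beta> x A \<le> nbhd_degree \<beta> x A'"
  unfolding nbhd_degree_def[of \<beta> x A]
proof (rule fsup_least)
  fix s assume "s \<in> {\<beta> B | B. x \<in> B \<and> B \<subseteq> A}"
  then obtain B where "s = \<beta> B" "x \<in> B" "B \<subseteq> A" by blast
  then show "s \<le> nbhd_degree \<beta> x A'" using assms by (auto intro: le_nbhd_degree)
qed (use nbhd_degree_unit_interval[OF \<beta> assms(3)] in blast)

lemma nbhd_degree_Int:
  assumes \<beta>: "fuzzy_family X \<beta>"
    and \<beta>_Int: "\<And>C1 C2. C1 \<subseteq> X \<Longrightarrow> C2 \<subseteq> X \<Longrightarrow> min (\<beta> C1) (\<beta> C2) \<le> \<beta> (C1 \<inter> C2)"
    and "A \<subseteq> X" "B \<subseteq> X" "x \<in> A" "x \<in> B"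
  shows "min (nbhd_degree \<beta> x A) (nbhd_degree \<beta> x B) \<le> nbhd_degree \<beta> x (A \<inter> B)"
  unfolding nbhd_degree_def
proof (rule min_fsup_le_fsup)
  show "{\<beta> C | C. x \<in> C \<and> C \<subseteq> A} \<noteq> {}" "{\<beta> C | C. x \<in> C \<and> C \<subseteq> B} \<noteq> {}"
    using assms(5,6) by blast+
  show "bdd_above {\<beta> C | C. x \<in> C \<and> C \<subseteq> A}"
    using \<beta> assms(3) by (rule nbhd_degree_values_bdd_above)
  show "bdd_above {\<beta> C | C. x \<in> C \<and> C \<subseteq> B}"
    using \<beta> assms(4) by (rule nbhd_degree_values_bdd_above)
  show "bdd_above {\<beta> C | C. x \<in> C \<and> C \<subseteq> A \<inter> B}"
    using assms(3) by (intro nbhd_degree_values_bdd_above[OF \<beta>]) blast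
  fix a b assume "a \<in> {\<beta> C | C. x \<in> C \<and> C \<subseteq> A}" "b \<in> {\<beta> C | C. x \<in> C \<and> C \<subseteq> B}"
  then obtain C1 C2 where "a = \<beta> C1" "x \<in> C1" "C1 \<subseteq> A" "b = \<beta> C2" "x \<in> C2" "C2 \<subseteq> B"
    by blast
  then show "\<exists>c\<in>{\<beta> C | C. x \<in> C \<and> C \<subseteq> A \<inter> B}. min a b \<le> c"
    using \<beta>_Int[of C1 C2] assms(3,4) by (intro bexI[of _ "\<beta> (C1 \<inter> C2)"]) auto
qed

definition generated_topology :: "('a set \<Rightarrow> real) \<Rightarrow> 'a set \<Rightarrow> real" where
  "generated_topology \<beta> A = finf {nbhd_degree \<beta> x A | x. x \<in> A}"

lemma generated_topology_unit_interval:
  assumes "fuzzy_family X \<beta>" "A \<subseteq> X"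
  shows "0 \<le> generated_topology \<beta> A \<and> generated_topology \<beta> A \<le> 1"
  unfolding generated_topology_def
  using nbhd_degree_unit_interval[OF assms] by (intro finf_unit_interval) blast

lemma generated_topology_le_nbhd_degree:
  assumes "fuzzy_family X \<beta>" "A \<subseteq> X" "x \<in> A"
  shows "generated_topology \<beta> A \<le> nbhd_degree \<beta> x A"
  unfolding generated_topology_def
  using nbhd_degree_unit_interval[OF assms(1,2)] assms(3)
  by (intro finf_lower bdd_belowI[where m=0]) blast+

lemma le_generated_topology:
  assumes "fuzzy_family X \<beta>" "A \<subseteq> X"
  shows "\<beta> A \<le> generated_topology \<beta> A"
  unfolding generated_topology_def
  using assms le_nbhd_degree[OF assms] unfolding fuzzy_family_def
  by (intro finf_greatest) blast+

lemma pre_base_generated_topology: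
  assumes \<beta>: "fuzzy_family X \<beta>"
  shows "pre_base X \<beta> (generated_topology \<beta>)"
  unfolding pre_base_iff_nbhd_degree
proof (intro conjI allI impI)
  show "\<beta> A \<le> generated_topology \<beta> A" if "A \<subseteq> X" for A
    using \<beta> that by (rule le_generated_topology)
  fix x A assume A: "A \<subseteq> X"
  show "nbhd_degree (generated_topology \<beta>) x A \<le> nbhd_degree \<beta> x A"
    unfolding nbhd_degree_def[of "generated_topology \<beta>"]
  proof (rule fsup_least)
    fix s assume "s \<in> {generated_topology \<beta> B | B. x \<in> B \<and> B \<subseteq> A}"
    then obtain B where B: "s = generated_topology \<beta> B" "x \<in> B" "B \<subseteq> A" by blast
    then have "s \<le> nbhd_degree \<beta> x B"
      using A by (auto intro: generated_topology_le_nbhd_degree[OF \<beta>])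
    also have "\<dots> \<le> nbhd_degree \<beta> x A" using B A by (intro nbhd_degree_mono[OF \<beta>])
    finally show "s \<le> nbhd_degree \<beta> x A" .
  qed (use nbhd_degree_unit_interval[OF \<beta> A] in blast)
qed

lemma fuzzifying_topology_generated_topology:
  assumes \<beta>: "fuzzy_family X \<beta>"
    and \<beta>_Int: "\<And>C1 C2. C1 \<subseteq> X \<Longrightarrow> C2 \<subseteq> X \<Longrightarrow> min (\<beta> C1) (\<beta> C2) \<le> \<beta> (C1 \<inter> C2)"
    and nbhd_X: "\<And>x. x \<in> X \<Longrightarrow> nbhd_degree \<beta> x X = 1"
  shows "fuzzifying_topology X (generated_topology \<beta>)"
  unfolding fuzzifying_topology_def
proof (intro conjI allI impI)
  let ?T = "generated_topology \<beta>"
  note T_unit = generated_topology_unit_interval[OF \<beta>]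
  note T_le_nbhd = generated_topology_le_nbhd_degree[OF \<beta>]
  show "fuzzy_family X ?T" unfolding fuzzy_family_def using T_unit by blast
  show "?T X = 1"
  proof (rule antisym)
    show "?T X \<le> 1" using T_unit[of X] by blast
    show "1 \<le> ?T X" unfolding generated_topology_def by (rule finf_greatest) (use nbhd_X in auto)
  qed
  fix A B assume AB: "A \<subseteq> X" "B \<subseteq> X"
  show "min (?T A) (?T B) \<le> ?T (A \<inter> B)"
    unfolding generated_topology_def[of \<beta> "A \<inter> B"]
  proof (rule finf_greatest)
    fix s assume "s \<in> {nbhd_degree \<beta> x (A \<inter> B) | x. x \<in> A \<inter> B}"
    then obtain x where x: "s = nbhd_degree \<beta> x (A \<inter> B)" "x \<in> A" "x \<in> B" by blast
    have "min (?T A) (?T B) \<le> min (nbhd_degree \<beta> x A) (nbhd_degree \<beta> x B)"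
      using T_le_nbhd[OF AB(1) x(2)] T_le_nbhd[OF AB(2) x(3)] by (rule min.mono)
    also have "\<dots> \<le> s" unfolding x(1) using nbhd_degree_Int[OF \<beta> \<beta>_Int AB x(2,3)] .
    finally show "min (?T A) (?T B) \<le> s" .
  qed (use T_unit[OF AB(1)] in \<open>blast intro: min.coboundedI1\<close>)
next
  let ?T = "generated_topology \<beta>"
  fix \<F> assume \<F>: "\<F> \<subseteq> Pow X"
  have T_unit: "0 \<le> ?T A \<and> ?T A \<le> 1" if "A \<in> \<F>" for A
    using generated_topology_unit_interval[OF \<beta>] that \<F> by blast
  show "finf (?T ` \<F>) \<le> ?T (\<Union>\<F>)"
    unfolding generated_topology_def[of \<beta> "\<Union>\<F>"]
  proof (rule finf_greatest)
    fix s assume "s \<in> {nbhd_degree \<beta> x (\<Union>\<F>) | x. x \<in> \<Union>\<F>}"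
    then obtain x A where xA: "s = nbhd_degree \<beta> x (\<Union>\<F>)" "x \<in> A" "A \<in> \<F>" by blast
    have A: "A \<subseteq> X" using xA(3) \<F> by blast
    have "finf (?T ` \<F>) \<le> ?T A"
      using xA(3) by (rule finf_image_lower) (use T_unit in blast)
    also have "\<dots> \<le> nbhd_degree \<beta> x A"
      using A xA(2) by (rule generated_topology_le_nbhd_degree[OF \<beta>])
    also have "\<dots> \<le> s"
      unfolding xA(1) using \<F> xA(3) by (intro nbhd_degree_mono[OF \<beta>] Union_upper Union_least) blast+
    finally show "finf (?T ` \<F>) \<le> s" .
  next
    show "finf (?T ` \<F>) \<le> 1" using finf_image_unit_interval[of \<F> ?T] T_unit by blast
  qed
qed

lemma union_closure_unit_interval:
  assumes "fuzzy_family X phi"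
  shows "0 \<le> union_closure X phi A \<and> union_closure X phi A \<le> 1"
  unfolding union_closure_def
proof (rule fsup_unit_interval)
  fix s assume "s \<in> {finf (phi ` \<F>) | \<F>. \<F> \<subseteq> Pow X \<and> \<Union>\<F> = A}"
  then obtain \<F> where "\<F> \<subseteq> Pow X" "s = finf (phi ` \<F>)" by blast
  then show "0 \<le> s \<and> s \<le> 1" using finf_image_unit_interval_Pow[OF assms] by blast
qed

lemma le_union_closure:
  assumes phi: "fuzzy_family X phi" and "\<F> \<subseteq> Pow X" "\<Union>\<F> = A" "c \<le> 1"
    and "\<And>C. C \<in> \<F> \<Longrightarrow> c \<le> phi C"
  shows "c \<le> union_closure X phi A"
proof -
  have "c \<le> finf (phi ` \<F>)" using assms(4,5) by (intro finf_greatest) auto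
  also have "\<dots> \<le> union_closure X phi A"
    unfolding union_closure_def
  proof (rule fsup_upper)
    show "finf (phi ` \<F>) \<in> {finf (phi ` \<F>) | \<F>. \<F> \<subseteq> Pow X \<and> \<Union>\<F> = A}"
      using assms(2,3) by blast
    show "bdd_above {finf (phi ` \<F>) | \<F>. \<F> \<subseteq> Pow X \<and> \<Union>\<F> = A}"
      using finf_image_unit_interval_Pow[OF phi] by (intro bdd_aboveI[where M=1]) blast
  qed
  finally show ?thesis .
qed

lemma union_closure_le_nbhd_degree:
  assumes phi: "fuzzy_family X phi" and x: "x \<in> X"
  shows "union_closure X phi X \<le> nbhd_degree (cap_closure X phi) x X"
  unfolding union_closure_def
proof (rule fsup_least)
  note \<beta> = fuzzy_family_cap_closure[OF phi]
  fix s assume "s \<in> {finf (phi ` \<F>) | \<F>. \<F> \<subseteq> Pow X \<and> \<Union>\<F> = X}"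
  then obtain \<F> where \<F>: "\<F> \<subseteq> Pow X" "\<Union>\<F> = X" "s = finf (phi ` \<F>)" by blast
  then obtain C where C: "C \<in> \<F>" "x \<in> C" using x by blast
  have "s \<le> phi C"
    unfolding \<F>(3) using C(1) fuzzy_family_unit_interval[OF phi \<F>(1)] by (auto intro: finf_image_lower)
  also have "\<dots> \<le> cap_closure X phi C" using C \<F> by (intro cap_closure_ge[OF phi]) auto
  also have "\<dots> \<le> nbhd_degree (cap_closure X phi) x X"
    using C \<F> by (intro le_nbhd_degree[OF \<beta>]) auto
  finally show "s \<le> nbhd_degree (cap_closure X phi) x X" .
qed (use nbhd_degree_unit_interval[OF fuzzy_family_cap_closure[OF phi]] in blast)

lemma union_closure_eq_1_iff:
  assumes phi: "fuzzy_family X phi"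
  shows "union_closure X phi X = 1 \<longleftrightarrow> (\<forall>x\<in>X. nbhd_degree (cap_closure X phi) x X = 1)"
proof
  note \<beta> = fuzzy_family_cap_closure[OF phi]
  show "\<forall>x\<in>X. nbhd_degree (cap_closure X phi) x X = 1" if "union_closure X phi X = 1"
    using that union_closure_le_nbhd_degree[OF phi] nbhd_degree_unit_interval[OF \<beta>]
    by (metis order_refl antisym)
  assume nbhd_X: "\<forall>x\<in>X. nbhd_degree (cap_closure X phi) x X = 1"
  have "c \<le> union_closure X phi X" if "c < 1" for c
  proof (cases "0 \<le> c")
    case True
    let ?G = "{C. C \<subseteq> X \<and> c \<le> phi C}"
    have "X \<subseteq> \<Union>?G"
    proof
      fix x assume "x \<in> X"
      then obtain B where "x \<in> B" "B \<subseteq> X" "c < cap_closure X phi B"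
        using nbhd_X \<open>c < 1\<close> True by (metis less_nbhd_degreeD[OF \<beta> order_refl])
      moreover obtain C where "B \<subseteq> C" "C \<subseteq> X" "c < phi C"
        using less_cap_closureD[OF phi True \<open>c < cap_closure X phi B\<close>] .
      ultimately show "x \<in> \<Union>?G" by auto
    qed
    then have "\<Union>?G = X" by blast
    then show ?thesis using \<open>c < 1\<close> by (intro le_union_closure[OF phi]) auto
  next
    case False
    then show ?thesis using union_closure_unit_interval[OF phi, of X] by linarith
  qed
  then have "1 \<le> union_closure X phi X" by (rule dense_le)
  then show "union_closure X phi X = 1" using union_closure_unit_interval[OF phi, of X] by linarith
qed

lemma nbhd_degree_eq_1_if_pre_base:
  assumes \<beta>: "fuzzy_family X \<beta>" and T: "fuzzifying_topology X T" and base: "pre_base X \<beta> T"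
    and x: "x \<in> X"
  shows "nbhd_degree \<beta> x X = 1"
proof (rule antisym)
  show "nbhd_degree \<beta> x X \<le> 1" using nbhd_degree_unit_interval[OF \<beta>] by blast
  have "1 = T X" using T unfolding fuzzifying_topology_def by simp
  also have "\<dots> \<le> nbhd_degree T x X"
    using T x unfolding fuzzifying_topology_def by (blast intro: le_nbhd_degree)
  also have "\<dots> \<le> nbhd_degree \<beta> x X" using base x unfolding pre_base_iff_nbhd_degree by blast
  finally show "1 \<le> nbhd_degree \<beta> x X" .
qed

theorem theorem2p3:
  fixes X :: "'a set" and phi :: "'a set \<Rightarrow> real"
  assumes "fuzzy_family X phi"
  shows "(\<exists>T. fuzzifying_topology X T \<and> pre_subbase X phi T) \<longleftrightarrow> union_closure X phi X = 1"
proof -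
  let ?\<beta> = "cap_closure X phi"
  have \<beta>: "fuzzy_family X ?\<beta>" using assms by (rule fuzzy_family_cap_closure)
  have "(\<exists>T. fuzzifying_topology X T \<and> pre_subbase X phi T) \<longleftrightarrow> (\<forall>x\<in>X. nbhd_degree ?\<beta> x X = 1)"
  proof
    assume "\<exists>T. fuzzifying_topology X T \<and> pre_subbase X phi T"
    then show "\<forall>x\<in>X. nbhd_degree ?\<beta> x X = 1"
      unfolding pre_subbase_def using nbhd_degree_eq_1_if_pre_base[OF \<beta>] by blast
  next
    assume "\<forall>x\<in>X. nbhd_degree ?\<beta> x X = 1"
    then have "fuzzifying_topology X (generated_topology ?\<beta>)"
      by (blast intro: fuzzifying_topology_generated_topology[OF \<beta> cap_closure_Int[OF assms]])
    moreover have "pre_subbase X phi (generated_topology ?\<beta>)"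
      unfolding pre_subbase_def using \<beta> by (rule pre_base_generated_topology)
    ultimately show "\<exists>T. fuzzifying_topology X T \<and> pre_subbase X phi T" by blast
  qed
  then show ?thesis using union_closure_eq_1_iff[OF assms] by simp
qed

end
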